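(* Let $f \in \mathrm{Inj}(\Omega)$ have at least one infinite cycle, and let $n \in \mathbb{Z}_+$ with $(f)\mathrm{C}_n > 0$. Then there is a transposition $h \in \mathrm{Fin}(\Omega)$ such that $(fh)\mathrm{C}_n = (f)\mathrm{C}_n - 1$ and $(fh)\mathrm{C}_m = (f)\mathrm{C}_m$ for all $m \in \mathbb{Z}_+ \setminus \{n\}$ (where, if $(f)\mathrm{C}_n=\aleph_0$, $(f)\mathrm{C}_n-1$ means $\aleph_0$).
   Context: $\Omega$ is a countably infinite set; maps are written on the right and composed left to right. $\mathrm{Inj}(\Omega)$ is the monoid of injective maps $\Omega\to\Omega$; $\mathrm{Fin}(\Omega)$ the group of permutations moving only finitely many points. For $f\in\mathrm{Inj}(\Omega)$, a cycle of $f$ is a nonempty $\Sigma\subseteq\Omega$ such that (a) for all $\alpha\in\Omega$, $(\alpha)f\in\Sigma$ iff $\alpha\in\Sigma$, and (b) no proper nonempty subset of $\Sigma$ satisfies (a). For $n\in\mathbb{Z}_+$, $(f)\mathrm{C}_n$ is the cardinal number of cycles of $f$ of cardinality $n$. *)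

theory Defs
  imports Main "HOL-Library.Extended_Nat" "HOL-Library.Countable_Set" "HOL-Combinatorics.Transposition"
begin

definition closed_set :: "('a \<Rightarrow> 'a) \<Rightarrow> 'a set \<Rightarrow> bool" where
  "closed_set f S \<longleftrightarrow> (\<forall>x. f x \<in> S \<longleftrightarrow> x \<in> S)"

definition is_cycle :: "('a \<Rightarrow> 'a) \<Rightarrow> 'a set \<Rightarrow> bool" where
  "is_cycle f S \<longleftrightarrow> S \<noteq> {} \<and> closed_set f S \<and>
     (\<forall>T. T \<subseteq> S \<and> T \<noteq> S \<and> T \<noteq> {} \<longrightarrow> \<not> closed_set f T)"

(* (f)C_n: the cardinal number of cycles of f of cardinality n, as an extended
   natural (the base set is countable, so the cardinal is in {0,1,...,aleph_0}). *)
definition cyc_count :: "('a \<Rightarrow> 'a) \<Rightarrow> nat \<Rightarrow> enat" where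
  "cyc_count f n = (let C = {S. is_cycle f S \<and> finite S \<and> card S = n} in
                     if finite C then enat (card C) else \<infinity>)"

end

theory Submission
  imports Defs
begin

(* Pick a finite cycle C of f of size n, an infinite cycle D, and points
   a in C, b in D; put g = transpose a b o f (first f, then swap a and b).
   The key observation is that, because f permutes the finite set C, a set T is
   g-closed exactly when it is f-closed and contains both or neither of a and b.
   Consequently a finite g-cycle cannot meet the infinite cycle D, hence avoids a and b,
   and on sets avoiding a and b the maps f and g have the same closed subsets.  So the
   finite cycles of g are precisely the finite cycles of f other than C.  Removing one
   element from a set changes its cardinality in enat by -1 (also for infinite sets),
   which gives the count statement. *)

lemma closed_setD: "closed_set f S \<Longrightarrow> f x \<in> S \<longleftrightarrow> x \<in> S"
  unfolding closed_set_def by blast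

lemma closed_set_Int: "closed_set f A \<Longrightarrow> closed_set f B \<Longrightarrow> closed_set f (A \<inter> B)"
  unfolding closed_set_def by blast

lemma is_cycle_closed: "is_cycle f S \<Longrightarrow> closed_set f S"
  and is_cycle_nonempty: "is_cycle f S \<Longrightarrow> S \<noteq> {}"
  unfolding is_cycle_def by blast+

lemma cycle_subset_or_disjoint:
  assumes "is_cycle f C" "closed_set f U"
  shows "C \<subseteq> U \<or> C \<inter> U = {}"
proof -
  have "closed_set f (C \<inter> U)"
    using assms is_cycle_closed closed_set_Int by blast
  then show ?thesis
    using assms(1) unfolding is_cycle_def by blast
qed

lemma cycles_disjoint:
  assumes "is_cycle f S" "is_cycle f T" "S \<noteq> T"
  shows "S \<inter> T = {}"
  using cycle_subset_or_disjoint[OF assms(1) is_cycle_closed[OF assms(2)]]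
        cycle_subset_or_disjoint[OF assms(2) is_cycle_closed[OF assms(1)]] assms(3)
  by blast

text \<open>An injective map sending a finite set into itself maps it onto itself, so every
  preimage of a point of the set lies in the set.\<close>
lemma inj_finite_preimage:
  assumes "inj f" "finite S" "f ` S \<subseteq> S" "f x \<in> S"
  shows "x \<in> S"
proof -
  have "f ` S = S"
    using endo_inj_surj[OF assms(2,3)] assms(1) by (simp add: inj_on_subset)
  then obtain y where "y \<in> S" "f x = f y"
    using assms(4) by (metis imageE)
  then show ?thesis
    using assms(1) by (simp add: inj_eq)
qed

text \<open>If T contains both or neither of a and b, the swap of a and b preserves T, so
  f and transpose a b o f have the same behaviour with respect to T.\<close>
lemma closed_set_transpose_iff:
  assumes "a \<in> T \<longleftrightarrow> b \<in> T"
  shows "closed_set (transpose a b \<circ> f) T \<longleftrightarrow> closed_set f T"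
proof -
  have "transpose a b y \<in> T \<longleftrightarrow> y \<in> T" for y
    using assms by (auto simp: transpose_def)
  then show ?thesis
    unfolding closed_set_def by simp
qed

lemma is_cycle_transpose_outside:
  assumes "a \<notin> S" "b \<notin> S"
  shows "is_cycle (transpose a b \<circ> f) S \<longleftrightarrow> is_cycle f S"
proof -
  have "closed_set (transpose a b \<circ> f) T \<longleftrightarrow> closed_set f T" if "T \<subseteq> S" for T
    using that assms by (intro closed_set_transpose_iff) blast
  then show ?thesis
    unfolding is_cycle_def by blast
qed

text \<open>Indeed, the points
  of C on the same side of T as a form an f-invariant subset of C containing a, so they
  contain the f-preimage p of a; and p is mapped to b by the new map.\<close>
lemma closed_transpose_balanced:
  assumes inj: "inj f" and C: "finite C" "closed_set f C" "a \<in> C" "b \<notin> C"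
    and T: "closed_set (transpose a b \<circ> f) T"
  shows "a \<in> T \<longleftrightarrow> b \<in> T"
proof -
  define g where "g = transpose a b \<circ> f"
  have g_eq: "g x = f x" if "f x \<noteq> a" "f x \<noteq> b" for x
    using that by (simp add: g_def)
  define S where "S = {x \<in> C. x \<in> T \<longleftrightarrow> a \<in> T}"
  have "f ` S \<subseteq> S"
  proof
    fix y assume "y \<in> f ` S"
    then obtain x where x: "x \<in> C" "x \<in> T \<longleftrightarrow> a \<in> T" and y: "y = f x"
      unfolding S_def by blast
    have "f x \<in> C"
      using x(1) closed_setD[OF C(2)] by blast
    moreover have "f x \<in> T \<longleftrightarrow> a \<in> T"
    proof (cases "f x = a")
      case False
      then have "g x = f x"
        using \<open>f x \<in> C\<close> C(4) g_eq by metis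
      then show ?thesis
        using x(2) closed_setD[OF T[folded g_def]] by metis
    qed simp
    ultimately show "y \<in> S"
      unfolding S_def y by blast
  qed
  moreover have "finite S"
    using C(1) unfolding S_def by simp
  moreover obtain p where p: "f p = a"
    using endo_inj_surj[OF C(1)] closed_setD[OF C(2)] C(3) inj
    by (metis image_iff image_subsetI inj_on_subset subset_UNIV)
  moreover have "a \<in> S"
    using C(3) unfolding S_def by blast
  ultimately have "p \<in> S"
    using inj_finite_preimage[OF inj] by metis
  then have "p \<in> T \<longleftrightarrow> a \<in> T"
    unfolding S_def by blast
  moreover have "g p = b"
    using p by (simp add: g_def)
  ultimately show ?thesis
    using closed_setD[OF T[folded g_def], of p] by simp
qed

lemma closed_transpose_imp_closed:
  assumes "inj f" "finite C" "closed_set f C" "a \<in> C" "b \<notin> C"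
    and "closed_set (transpose a b \<circ> f) T"
  shows "closed_set f T"
  using closed_set_transpose_iff[OF closed_transpose_balanced[OF assms]] assms(6) by simp

definition cycles_of_size :: "('a \<Rightarrow> 'a) \<Rightarrow> nat \<Rightarrow> 'a set set" where
  "cycles_of_size f m = {S. is_cycle f S \<and> finite S \<and> card S = m}"

lemma cycles_of_size_transpose:
  assumes inj: "inj f"
    and C: "is_cycle f C" "finite C" and D: "is_cycle f D" "infinite D"
    and a: "a \<in> C" and b: "b \<in> D"
  shows "cycles_of_size (transpose a b \<circ> f) m = cycles_of_size f m - {C}"
proof -
  have "C \<inter> D = {}"
    using cycles_disjoint[OF C(1) D(1)] C(2) D(2) by blast
  then have b_notin_C: "b \<notin> C"
    using b by blast
  have "is_cycle (transpose a b \<circ> f) S \<longleftrightarrow> is_cycle f S \<and> S \<noteq> C"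
    if "finite S" for S
  proof
    assume S: "is_cycle (transpose a b \<circ> f) S"
    have S_closed: "closed_set f S"
      using closed_transpose_imp_closed[OF inj C(2) is_cycle_closed[OF C(1)] a b_notin_C]
            is_cycle_closed[OF S] .
    have "b \<notin> S"
    proof
      assume "b \<in> S"
      then have "D \<subseteq> S"
        using cycle_subset_or_disjoint[OF D(1) S_closed] b by blast
      then show False
        using that D(2) finite_subset by blast
    qed
    moreover have "a \<notin> S"
      using closed_transpose_balanced[OF inj C(2) is_cycle_closed[OF C(1)] a b_notin_C
            is_cycle_closed[OF S]] \<open>b \<notin> S\<close> by blast
    ultimately show "is_cycle f S \<and> S \<noteq> C"
      using S is_cycle_transpose_outside a by metis
  next
    assume S: "is_cycle f S \<and> S \<noteq> C"
    have "S \<noteq> D"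
      using that D(2) by blast
    then have "a \<notin> S" "b \<notin> S"
      using S cycles_disjoint C(1) D(1) a b by blast+
    then show "is_cycle (transpose a b \<circ> f) S"
      using S is_cycle_transpose_outside by metis
  qed
  then show ?thesis
    unfolding cycles_of_size_def by blast
qed

lemma cyc_count_cycles_of_size:
  "cyc_count f m = (if finite (cycles_of_size f m) then enat (card (cycles_of_size f m)) else \<infinity>)"
  unfolding cyc_count_def cycles_of_size_def by simp

text \<open>Removing one element decreases the enat-valued cardinality by one
  (with the convention infinity - 1 = infinity).\<close>
lemma enat_card_remove:
  assumes "x \<in> A"
  shows "(if finite (A - {x}) then enat (card (A - {x})) else \<infinity>)
       = (if finite A then enat (card A) else \<infinity>) - 1"
proof (cases "finite A")
  case True
  then have "card A \<ge> 1"
    using assms card_0_eq by fastforce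
  then show ?thesis
    using True assms by (simp add: one_enat_def)
qed simp

lemma cycles_of_size_nonempty:
  assumes "cyc_count f n > 0"
  shows "cycles_of_size f n \<noteq> {}"
  using assms unfolding cyc_count_cycles_of_size by (auto simp: zero_enat_def)

theorem mainTheorem10:
  fixes f :: "'a \<Rightarrow> 'a" and n :: nat
  assumes "countable (UNIV :: 'a set)" and "infinite (UNIV :: 'a set)"
    and "inj f"
    and "\<exists>S. is_cycle f S \<and> infinite S"
    and "n > 0" and "cyc_count f n > 0"
  shows "\<exists>a b. a \<noteq> b \<and>
           cyc_count (transpose a b \<circ> f) n = cyc_count f n - 1 \<and>
           (\<forall>m. m > 0 \<and> m \<noteq> n \<longrightarrow> cyc_count (transpose a b \<circ> f) m = cyc_count f m)"
proof -
  obtain D where D: "is_cycle f D" "infinite D"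
    using assms(4) by blast
  obtain C where C: "C \<in> cycles_of_size f n"
    using cycles_of_size_nonempty[OF assms(6)] by blast
  then have C_fin: "is_cycle f C" "finite C" "card C = n"
    unfolding cycles_of_size_def by auto
  obtain a b where a: "a \<in> C" and b: "b \<in> D"
    using is_cycle_nonempty C_fin(1) D(1) by blast
  have "a \<noteq> b"
    using cycles_disjoint[OF C_fin(1) D(1)] C_fin(2) D(2) a b by blast
  moreover note new = cycles_of_size_transpose[OF assms(3) C_fin(1,2) D a b]
  have "cyc_count (transpose a b \<circ> f) n = cyc_count f n - 1"
    unfolding cyc_count_cycles_of_size new using enat_card_remove[OF C] by simp
  moreover have "cyc_count (transpose a b \<circ> f) m = cyc_count f m" if "m \<noteq> n" for m
  proof -
    have "C \<notin> cycles_of_size f m"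
      using C_fin(3) that unfolding cycles_of_size_def by auto
    then show ?thesis
      unfolding cyc_count_cycles_of_size new by simp
  qed
  ultimately show ?thesis
    by blast
qed

end
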